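(* Let $X$ be a $k$-variety and $\alpha:\mathbb{G}_a\times X\dashrightarrow X$ a nontrivial rational $\mathbb{G}_a$-action with co-action $\alpha^*:K_X\to K_X(t)$, and let $K_0=K_X^{\mathbb{G}_a}=\{h\in K_X:\alpha^*h=h\}$. Then there exists $s\in K_X$, transcendental over $K_0$, such that $\alpha^*(s)=s+t$ and $K_X=K_0(s)$; consequently $\alpha^*(f(s))=f(s+t)$ for every $f(s)\in K_0(s)=K_X$.
   Context: $k$ is a field of characteristic zero; a $k$-variety is a separated geometrically integral scheme of finite type over $k$, with function field $K_X$; $\mathbb{G}_a=\mathrm{Spec}(k[t])$. A rational $\mathbb{G}_a$-action on $X$ is given by a homomorphism of $k$-fields $\alpha^*:K_X\to K_X(t)$ with image in $\mathcal{O}_{\nu_0}=\{r(t)\in K_X(t):\mathrm{ord}_{t=0}r\ge 0\}$, such that $(\alpha^*\otimes\mathrm{id})\circ\alpha^*$ equals $\alpha^*$ followed by $t\mapsto t+t'$ (as maps $K_X\to K_X(t,t')$, where $\alpha^*\otimes \mathrm{id}$ applies $\alpha^*$ to coefficients of $K_X(t')$ and sends the new variable to $t$), and such that reduction of $\alpha^*$ modulo $t$ is the identity of $K_X$. The action is nontrivial if $\alpha^*\neq$ the inclusion $K_X\subset K_X(t)$. *)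

theory Defs
  imports "HOL-Computational_Algebra.Polynomial" "HOL-Computational_Algebra.Fraction_Field"
begin

(* The function field K_X is modelled as a type 'a :: field_char_0, the base field k
   as a subset of it.  K_X(t) is  'a poly fract  (variable t), and
   K_X(t,t') is  ('a poly fract) poly fract  = K_X(t)(t') (outer variable t'). *)

definition is_subfield :: "'a::field set \<Rightarrow> bool" where
  "is_subfield F \<longleftrightarrow> 0 \<in> F \<and> 1 \<in> F \<and>
     (\<forall>x\<in>F. \<forall>y\<in>F. x + y \<in> F \<and> x * y \<in> F) \<and>
     (\<forall>x\<in>F. - x \<in> F \<and> inverse x \<in> F)"

definition gen_field :: "'a::field set \<Rightarrow> 'a set" where
  "gen_field S = \<Inter> {F. is_subfield F \<and> S \<subseteq> F}"

definition algebraic_over :: "'a::field set \<Rightarrow> 'a \<Rightarrow> bool" where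
  "algebraic_over F x \<longleftrightarrow> (\<exists>p::'a poly. p \<noteq> 0 \<and> (\<forall>i. coeff p i \<in> F) \<and> poly p x = 0)"

(* K finitely generated as a field over k, and k algebraically closed in K
   (= K is the function field of a geometrically integral k-variety, char 0). *)
definition function_field_over :: "'a::field set \<Rightarrow> bool" where
  "function_field_over k \<longleftrightarrow> is_subfield k \<and>
     (\<exists>S. finite S \<and> gen_field (k \<union> S) = UNIV) \<and>
     (\<forall>x. algebraic_over k x \<longrightarrow> x \<in> k)"

definition cst :: "'a::field \<Rightarrow> 'a poly fract" where
  "cst c = Fract [:c:] 1"

definition tvar :: "'a::field poly fract" where
  "tvar = Fract [:0, 1:] 1"

(* alpha applied to the coefficients of K(t'), new variable mapped to t:
   K(t') \<rightarrow> K(t)(t') *)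
definition lift_coact :: "('a::field \<Rightarrow> 'a poly fract) \<Rightarrow> 'a poly fract \<Rightarrow> 'a poly fract poly fract" where
  "lift_coact \<alpha> r = (SOME x. \<exists>p q. q \<noteq> 0 \<and> r = Fract p q \<and>
       x = Fract (map_poly \<alpha> p) (map_poly \<alpha> q))"

(* substitution t \<mapsto> t + t' :  K(t) \<rightarrow> K(t)(t') *)
definition shift_pol :: "'a::field poly \<Rightarrow> 'a poly fract poly" where
  "shift_pol p = pcompose (map_poly cst p) [:tvar, 1:]"

definition shift :: "'a::field poly fract \<Rightarrow> 'a poly fract poly fract" where
  "shift r = (SOME x. \<exists>p q. q \<noteq> 0 \<and> r = Fract p q \<and>
       x = Fract (shift_pol p) (shift_pol q))"

definition rational_Ga_action :: "'a::field set \<Rightarrow> ('a \<Rightarrow> 'a poly fract) \<Rightarrow> bool" where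
  "rational_Ga_action k \<alpha> \<longleftrightarrow>
     (\<forall>x y. \<alpha> (x + y) = \<alpha> x + \<alpha> y) \<and>
     (\<forall>x y. \<alpha> (x * y) = \<alpha> x * \<alpha> y) \<and>
     \<alpha> 1 = 1 \<and>
     (\<forall>c\<in>k. \<alpha> c = cst c) \<and>
     (\<comment> \<open>image in O_{nu_0} and reduction modulo t is the identity\<close>
      \<forall>h. \<exists>p q. \<alpha> h = Fract p q \<and> poly q 0 \<noteq> 0 \<and> poly p 0 = h * poly q 0) \<and>
     (\<forall>h. lift_coact \<alpha> (\<alpha> h) = shift (\<alpha> h))"

definition invariants :: "('a::field \<Rightarrow> 'a poly fract) \<Rightarrow> 'a set" where
  "invariants \<alpha> = {h. \<alpha> h = cst h}"

end

theory Submission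
  imports Defs
begin

(* Write P/Q for the reduced representation of alpha^*(f) in K(t), with Q monic.  The cocycle
   identity says that applying alpha^* to the coefficients of P/Q gives P(t + t')/Q(t + t');
   since both sides are again reduced with monic denominators, alpha^* acts on the coefficient
   lists of P and of Q exactly like the translation t |-> t + t'.  If f is not invariant, one of
   P, Q has a degree m >= 1, and comparing the coefficients of t'^(m-1) shows that
   s = p_(m-1) / (m * p_m) satisfies alpha^*(s) = s + t (characteristic zero is used here).
   Conversely, for any h, translating the reduced representation of alpha^*(h) by -s gives
   polynomials with invariant coefficients whose values at t = s return h (reduction modulo t),
   so K_X = K_0(s); and since alpha^* acts on K_0[s] by s |-> s + t, s is transcendental. *)


locale comm_ring_hom =
  fixes f :: "'a::comm_ring_1 \<Rightarrow> 'b::comm_ring_1"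
  assumes hom_add: "f (x + y) = f x + f y"
    and hom_mult: "f (x * y) = f x * f y"
    and hom_one: "f 1 = 1"
begin

lemma hom_zero [simp]: "f 0 = 0"
  using hom_add[of 0 0] by simp

lemma hom_uminus: "f (- x) = - f x"
proof -
  have "f x + f (- x) = 0" using hom_add[of x "- x"] by simp
  from minus_unique[OF this] show ?thesis by simp
qed

lemma hom_of_nat: "f (of_nat n) = of_nat n"
  by (induction n) (simp_all add: hom_add hom_one)

lemma map_poly_hom_add: "map_poly f (p + q) = map_poly f p + map_poly f q"
  by (intro poly_eqI) (simp add: coeff_map_poly hom_add)

lemma map_poly_hom_smult: "map_poly f (smult c p) = smult (f c) (map_poly f p)"
  by (intro poly_eqI) (simp add: coeff_map_poly hom_mult)

lemma map_poly_hom_mult: "map_poly f (p * q) = map_poly f p * map_poly f q"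
  by (induction p) (simp_all add: map_poly_pCons map_poly_hom_add map_poly_hom_smult)

lemma poly_hom: "f (poly p x) = poly (map_poly f p) (f x)"
  by (induction p) (simp_all add: map_poly_pCons hom_add hom_mult)

lemma map_poly_hom_pcompose: "map_poly f (p \<circ>\<^sub>p q) = map_poly f p \<circ>\<^sub>p map_poly f q"
  by (induction p)
    (simp_all add: pcompose_pCons map_poly_pCons map_poly_hom_add map_poly_hom_mult)

end

locale field_hom = comm_ring_hom f for f :: "'a::field \<Rightarrow> 'b::field"
begin

lemma hom_eq_0_iff [simp]: "f x = 0 \<longleftrightarrow> x = 0"
  by (metis hom_mult hom_one hom_zero right_inverse mult_zero_left zero_neq_one)

lemma hom_inverse: "f (inverse x) = inverse (f x)"
proof (cases "x = 0")
  case False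
  then have "f x * f (inverse x) = 1" by (metis hom_mult hom_one right_inverse)
  then show ?thesis by (rule inverse_unique[symmetric])
qed simp

lemma hom_divide: "f (x / y) = f x / f y"
  by (simp add: divide_inverse hom_mult hom_inverse)

lemma map_poly_hom_eq_0_iff [simp]: "map_poly f p = 0 \<longleftrightarrow> p = 0"
  by (simp add: map_poly_eq_0_iff)

lemma degree_map_poly_hom [simp]: "degree (map_poly f p) = degree p"
  by (intro degree_map_poly) simp

end


(* First, a nonzero element of least degree in the ideal
   (P, Q) divides both P and Q. *)
lemma poly_ideal_generator:
  fixes P Q :: "'b::field poly"
  assumes "Q \<noteq> 0"
  obtains g a b where "g \<noteq> 0" "a * P + b * Q = g" "g dvd P" "g dvd Q"
proof -
  let ?comb = "\<lambda>g. g \<noteq> 0 \<and> (\<exists>a b. a * P + b * Q = g)"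
  have "?comb Q" using assms by (intro conjI exI[of _ 0] exI[of _ 1]) simp_all
  then obtain g where g: "?comb g" and least: "\<And>h. ?comb h \<Longrightarrow> degree g \<le> degree h"
    using ex_has_least_nat[of ?comb Q degree] by blast
  from g obtain a b where ab: "a * P + b * Q = g" by blast
  have dvd: "g dvd c * P + d * Q" for c d
  proof (rule ccontr)
    let ?R = "c * P + d * Q"
    assume "\<not> g dvd ?R"
    then have nz: "?R mod g \<noteq> 0" by (simp add: mod_eq_0_iff_dvd)
    have "(c - ?R div g * a) * P + (d - ?R div g * b) * Q = ?R mod g"
      by (simp add: minus_div_mult_eq_mod[symmetric] ab[symmetric] algebra_simps)
    with nz have "degree g \<le> degree (?R mod g)" by (intro least) blast
    with degree_mod_less'[OF _ nz] g show False by simp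
  qed
  from dvd[of 1 0] dvd[of 0 1] g ab show ?thesis by (intro that) simp_all
qed

lemma reduced_fract_repr:
  fixes z :: "'b::field poly fract"
  obtains P Q a b where "z = Fract P Q" "Q \<noteq> 0" "lead_coeff Q = 1" "a * P + b * Q = 1"
proof -
  let ?repr = "\<lambda>(P, Q). Q \<noteq> 0 \<and> z = Fract P Q"
  obtain P0 Q0 where "z = Fract P0 Q0" "Q0 \<noteq> 0" by (cases z)
  then have "?repr (P0, Q0)" by simp
  then obtain P Q where PQ: "Q \<noteq> 0" "z = Fract P Q"
    and least: "\<And>P' Q'. ?repr (P', Q') \<Longrightarrow> degree Q \<le> degree Q'"
    using ex_has_least_nat[of ?repr "(P0, Q0)" "degree \<circ> snd"] by fastforce
  obtain g a b where g: "g \<noteq> 0" "a * P + b * Q = g" "g dvd P" "g dvd Q"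
    using poly_ideal_generator[OF PQ(1)] by blast
  obtain P1 Q1 where P1: "P = g * P1" and Q1: "Q = g * Q1"
    using g(3,4) by (elim dvdE)
  have "Q1 \<noteq> 0" "z = Fract P1 Q1" using PQ P1 Q1 g(1) by (simp_all add: mult_fract_cancel)
  then have "degree Q \<le> degree Q1" by (intro least) simp
  with Q1 g(1) \<open>Q1 \<noteq> 0\<close> have "degree g = 0" by (simp add: degree_mult_eq)
  then obtain c where c: "g = [:c:]" by (elim degree_eq_zeroE)
  define l where "l = lead_coeff Q"
  have "c \<noteq> 0" "l \<noteq> 0" using g(1) c PQ(1) by (simp_all add: l_def)
  show ?thesis
  proof (rule that)
    show "z = Fract (smult (inverse l) P) (smult (inverse l) Q)"
      using PQ(2) \<open>l \<noteq> 0\<close> mult_fract_cancel[of "[:inverse l:]" P Q] by simp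
    show "smult (inverse l) Q \<noteq> 0" "lead_coeff (smult (inverse l) Q) = 1"
      using PQ(1) \<open>l \<noteq> 0\<close> by (simp_all add: l_def)
    have "smult (l / c) a * smult (inverse l) P + smult (l / c) b * smult (inverse l) Q
        = smult (inverse c) (a * P + b * Q)"
      using \<open>l \<noteq> 0\<close> by (simp add: smult_add_right field_simps)
    then show "smult (l / c) a * smult (inverse l) P + smult (l / c) b * smult (inverse l) Q = 1"
      using g(2) c \<open>c \<noteq> 0\<close> by (simp add: one_pCons)
  qed
qed

lemma bezout_denominator_dvd:
  fixes p q P Q :: "'b::comm_ring_1"
  assumes "p * Q = P * q" and "a * P + b * Q = 1"
  shows "Q dvd q"
proof -
  have "q = q * (a * P + b * Q)" using assms(2) by simp
  also have "\<dots> = a * (P * q) + b * q * Q" by (simp add: algebra_simps)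
  also have "\<dots> = Q * (a * p + b * q)" by (simp add: assms(1)[symmetric] algebra_simps)
  finally show ?thesis by (rule dvdI)
qed

lemma reduced_fract_unique:
  fixes A B C D :: "'b::field poly"
  assumes eq: "A * D = B * C" and bezout: "u * B + v * D = 1" and "C \<noteq> 0"
    and deg: "degree C = degree D" and lead: "lead_coeff C = lead_coeff D"
  shows "C = D" "A = B"
proof -
  obtain r where r: "C = D * r" using bezout_denominator_dvd[OF eq bezout] by (elim dvdE)
  with \<open>C \<noteq> 0\<close> have "D \<noteq> 0" "r \<noteq> 0" by auto
  with r deg have "degree r = 0" by (simp add: degree_mult_eq)
  then obtain r0 where r0: "r = [:r0:]" by (elim degree_eq_zeroE)
  with r lead \<open>D \<noteq> 0\<close> \<open>r \<noteq> 0\<close> have "r0 = 1" by (simp add: lead_coeff_mult)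
  with r r0 show "C = D" by (simp add: one_pCons)
  with eq \<open>D \<noteq> 0\<close> show "A = B" by simp
qed

lemma Fract_map_SOME:
  fixes \<phi> :: "'c::idom \<Rightarrow> 'd::idom"
  assumes mult: "\<And>x y. \<phi> (x * y) = \<phi> x * \<phi> y"
    and nz: "\<And>q. q \<noteq> 0 \<Longrightarrow> \<phi> q \<noteq> 0" and "q0 \<noteq> 0"
  shows "(SOME x. \<exists>p q. q \<noteq> 0 \<and> Fract p0 q0 = Fract p q \<and> x = Fract (\<phi> p) (\<phi> q))
         = Fract (\<phi> p0) (\<phi> q0)"
proof (rule someI2_ex)
  show "\<exists>x p q. q \<noteq> 0 \<and> Fract p0 q0 = Fract p q \<and> x = Fract (\<phi> p) (\<phi> q)"
    using \<open>q0 \<noteq> 0\<close> by blast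
next
  fix x assume "\<exists>p q. q \<noteq> 0 \<and> Fract p0 q0 = Fract p q \<and> x = Fract (\<phi> p) (\<phi> q)"
  then obtain p q where pq: "q \<noteq> 0" "Fract p0 q0 = Fract p q" "x = Fract (\<phi> p) (\<phi> q)"
    by blast
  from pq(1,2) \<open>q0 \<noteq> 0\<close> have "\<phi> p0 * \<phi> q = \<phi> p * \<phi> q0"
    by (simp add: eq_fract mult[symmetric])
  with pq(1,3) \<open>q0 \<noteq> 0\<close> show "x = Fract (\<phi> p0) (\<phi> q0)" by (simp add: eq_fract nz)
qed


(* The translation x |-> x + c: its two leading coefficients.  The subleading one,
   coeff p n + (n + 1) * c * lead_coeff p, is what produces a slice. *)
lemma lead_coeff_pcompose_translate:
  fixes p :: "'b::idom poly"
  shows "coeff (p \<circ>\<^sub>p [:c, 1:]) (degree p) = lead_coeff p"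
  using lead_coeff_comp[of "[:c, 1:]" p] by (simp add: degree_pcompose)

lemma subleading_coeff_pcompose_translate:
  fixes p :: "'b::idom poly"
  assumes "degree p = Suc n"
  shows "coeff (p \<circ>\<^sub>p [:c, 1:]) n = coeff p n + of_nat (Suc n) * c * lead_coeff p"
  using assms
proof (induction p arbitrary: n)
  case 0
  then show ?case by simp
next
  case (pCons a p)
  have "p \<noteq> 0" and deg_p: "degree p = n" using pCons.prems by (auto split: if_splits)
  have coeff_eq: "coeff (pCons a p \<circ>\<^sub>p [:c, 1:]) n
      = (if n = 0 then a else 0) + c * coeff (p \<circ>\<^sub>p [:c, 1:]) n
        + (case n of 0 \<Rightarrow> 0 | Suc m \<Rightarrow> coeff (p \<circ>\<^sub>p [:c, 1:]) m)"
    by (simp add: pcompose_pCons coeff_pCons split: nat.split)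
  have lead: "coeff (p \<circ>\<^sub>p [:c, 1:]) n = lead_coeff p"
    using lead_coeff_pcompose_translate[of p c] deg_p by simp
  show ?case
  proof (cases n)
    case 0
    with deg_p \<open>p \<noteq> 0\<close> show ?thesis using coeff_eq lead by simp
  next
    case (Suc m)
    with pCons.IH[of m] deg_p \<open>p \<noteq> 0\<close> show ?thesis using coeff_eq lead
      by (simp add: algebra_simps)
  qed
qed


interpretation cst: field_hom "cst :: 'a::field \<Rightarrow> 'a poly fract"
  by unfold_locales (simp_all add: cst_def One_fract_def one_pCons mult.commute)

lemma cst_plus_tvar: "cst c + tvar = Fract [:c, 1:] 1"
  by (simp add: cst_def tvar_def)

lemma poly_map_cst_Fract: "poly (map_poly cst p) (Fract r 1) = Fract (p \<circ>\<^sub>p r) 1"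
  by (induction p) (simp_all add: map_poly_pCons pcompose_pCons Zero_fract_def cst_def)

interpretation shift_pol: comm_ring_hom "shift_pol :: 'a::field poly \<Rightarrow> _"
  by unfold_locales
    (simp_all add: shift_pol_def cst.map_poly_hom_add cst.map_poly_hom_mult
      pcompose_add pcompose_mult pcompose_1 cst.hom_one)

lemma degree_shift_pol [simp]: "degree (shift_pol p) = degree p"
  by (simp add: shift_pol_def degree_pcompose)

lemma shift_pol_eq_0_iff [simp]: "shift_pol p = 0 \<longleftrightarrow> p = 0"
  by (simp add: shift_pol_def pcompose_eq_0_iff)

lemma coeff_shift_pol_degree [simp]: "coeff (shift_pol p) (degree p) = cst (lead_coeff p)"
proof -
  have "lead_coeff (shift_pol p) = cst (lead_coeff p)"
    by (simp add: shift_pol_def lead_coeff_comp coeff_map_poly)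
  then show ?thesis by simp
qed

lemma subleading_coeff_shift_pol:
  assumes "degree p = Suc n"
  shows "coeff (shift_pol p) n = cst (coeff p n) + tvar * cst (of_nat (Suc n) * lead_coeff p)"
  using subleading_coeff_pcompose_translate[of "map_poly cst p" n tvar] assms
  by (simp add: shift_pol_def coeff_map_poly cst.hom_add cst.hom_mult cst.hom_of_nat
      algebra_simps)

lemma shift_Fract: "q \<noteq> 0 \<Longrightarrow> shift (Fract p q) = Fract (shift_pol p) (shift_pol q)"
  unfolding shift_def by (rule Fract_map_SOME) (simp_all add: shift_pol.hom_mult)



lemma poly_in_subfield:
  assumes F: "is_subfield F" and "\<forall>i. coeff p i \<in> F" and "x \<in> F"
  shows "poly p x \<in> F"
  using assms(2)
proof (induction p)
  case 0
  then show ?case using F by (simp add: is_subfield_def)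
next
  case (pCons a p)
  then have "a \<in> F" "poly p x \<in> F" by (metis coeff_pCons_0, metis coeff_pCons_Suc)
  then show ?case using F \<open>x \<in> F\<close> by (simp add: is_subfield_def)
qed

lemma poly_quotient_in_gen_field:
  assumes "\<forall>i. coeff p i \<in> K" and "\<forall>i. coeff q i \<in> K"
  shows "poly p s / poly q s \<in> gen_field (K \<union> {s})"
  unfolding gen_field_def
proof (intro InterI, clarify)
  fix F assume F: "is_subfield F" "K \<union> {s} \<subseteq> F"
  with assms have "poly p s \<in> F" "poly q s \<in> F" by (auto intro!: poly_in_subfield)
  with F(1) show "poly p s / poly q s \<in> F" by (simp add: is_subfield_def divide_inverse)
qed


locale Ga_action =
  fixes k :: "'a::field_char_0 set" and \<alpha> :: "'a \<Rightarrow> 'a poly fract"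
  assumes action: "rational_Ga_action k \<alpha>"
begin

sublocale field_hom \<alpha>
  using action unfolding rational_Ga_action_def by unfold_locales blast+

lemma lift_coact_Fract:
  "q \<noteq> 0 \<Longrightarrow> lift_coact \<alpha> (Fract p q) = Fract (map_poly \<alpha> p) (map_poly \<alpha> q)"
  unfolding lift_coact_def by (rule Fract_map_SOME) (simp_all add: map_poly_hom_mult)

(* The reduced representation P/Q of alpha^*(h): the coaction translates the coefficients of
   P and Q (cocycle identity), and P(0)/Q(0) = h (reduction modulo t). *)
lemma coaction_repr:
  obtains P Q where "\<alpha> h = Fract P Q" "Q \<noteq> 0"
    "map_poly \<alpha> P = shift_pol P" "map_poly \<alpha> Q = shift_pol Q"
    "poly Q 0 \<noteq> 0" "poly P 0 = h * poly Q 0"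
proof -
  obtain P Q a b where PQ: "\<alpha> h = Fract P Q" "Q \<noteq> 0" "lead_coeff Q = 1"
    and bezout: "a * P + b * Q = 1"
    using reduced_fract_repr by blast
  have "lift_coact \<alpha> (\<alpha> h) = shift (\<alpha> h)"
    using action by (simp add: rational_Ga_action_def)
  then have "Fract (map_poly \<alpha> P) (map_poly \<alpha> Q) = Fract (shift_pol P) (shift_pol Q)"
    using PQ by (simp add: lift_coact_Fract shift_Fract)
  then have cross_shift: "map_poly \<alpha> P * shift_pol Q = shift_pol P * map_poly \<alpha> Q"
    using PQ(2) by (simp add: eq_fract)
  have bezout_shift: "shift_pol a * shift_pol P + shift_pol b * shift_pol Q = 1"
    using bezout by (metis shift_pol.hom_add shift_pol.hom_mult shift_pol.hom_one)
  have "lead_coeff (map_poly \<alpha> Q) = lead_coeff (shift_pol Q)"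
    using PQ(3) by (simp add: coeff_map_poly hom_one cst.hom_one)
  from reduced_fract_unique[OF cross_shift bezout_shift _ _ this] PQ(2)
  have translate: "map_poly \<alpha> Q = shift_pol Q" "map_poly \<alpha> P = shift_pol P"
    by simp_all
  obtain p q where pq: "\<alpha> h = Fract p q" "poly q 0 \<noteq> 0" "poly p 0 = h * poly q 0"
    using action unfolding rational_Ga_action_def by blast
  then have "q \<noteq> 0" by auto
  with pq(1) PQ have cross: "p * Q = P * q" by (simp add: eq_fract)
  then obtain r where "q = Q * r" using bezout_denominator_dvd[OF cross bezout] by (elim dvdE)
  with pq(2) have Q0: "poly Q 0 \<noteq> 0" by auto
  from arg_cong[OF cross, of "\<lambda>f. poly f 0"] pq(2,3) have "poly P 0 = h * poly Q 0"
    by (simp add: algebra_simps)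
  with PQ(1,2) translate Q0 show ?thesis by (intro that) simp_all
qed

(* The slice: a polynomial of positive degree whose coefficients are translated by the
   coaction yields s with alpha^*(s) = s + t, from its two leading coefficients. *)
lemma slice_from_translated_poly:
  assumes translate: "map_poly \<alpha> P = shift_pol P" and "degree P \<noteq> 0"
  obtains s where "\<alpha> s = cst s + tvar"
proof -
  obtain n where n: "degree P = Suc n" using \<open>degree P \<noteq> 0\<close> not0_implies_Suc by blast
  define d where "d = of_nat (Suc n) * lead_coeff P"
  have "P \<noteq> 0" using n by auto
  then have "d \<noteq> 0" by (simp add: d_def del: of_nat_Suc)
  have "\<alpha> (coeff P n) = cst (coeff P n) + tvar * cst d"
    using arg_cong[OF translate, of "\<lambda>p. coeff p n"] subleading_coeff_shift_pol[OF n]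
    by (simp add: coeff_map_poly d_def)
  moreover have "\<alpha> (lead_coeff P) = cst (lead_coeff P)"
    using arg_cong[OF translate, of "\<lambda>p. coeff p (degree P)"] by (simp add: coeff_map_poly)
  then have "\<alpha> d = cst d"
    by (simp add: d_def hom_mult hom_of_nat cst.hom_mult cst.hom_of_nat del: of_nat_Suc)
  ultimately have "\<alpha> (coeff P n / d) = cst (coeff P n / d) + tvar"
    using \<open>d \<noteq> 0\<close> by (simp add: hom_divide cst.hom_divide field_simps)
  then show ?thesis by (rule that)
qed

(* A non-invariant element has a non-constant numerator or denominator, hence gives a slice. *)
lemma slice_exists:
  assumes "\<alpha> f \<noteq> cst f"
  obtains s where "\<alpha> s = cst s + tvar"
proof -
  obtain P Q where PQ: "\<alpha> f = Fract P Q" "Q \<noteq> 0"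
    "map_poly \<alpha> P = shift_pol P" "map_poly \<alpha> Q = shift_pol Q" "poly P 0 = f * poly Q 0"
    using coaction_repr by blast
  consider "degree P \<noteq> 0" | "degree Q \<noteq> 0" | "degree P = 0" "degree Q = 0" by blast
  then show ?thesis
  proof cases
    case 3
    then obtain p q where "P = [:p:]" "Q = [:q:]" by (metis degree_eq_zeroE)
    with PQ have "\<alpha> f = cst f"
      by (simp add: cst_def mult_fract_cancel[of "[:q:]" "[:f:]" 1, symmetric] mult.commute)
    with assms show ?thesis by simp
  qed (use PQ slice_from_translated_poly that in blast)+
qed

context
  fixes s assumes slice: "\<alpha> s = cst s + tvar"
begin

lemma coaction_poly_slice:
  assumes "\<forall>i. coeff p i \<in> invariants \<alpha>"
  shows "\<alpha> (poly p s) = Fract (p \<circ>\<^sub>p [:s, 1:]) 1"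
proof -
  have "map_poly \<alpha> p = map_poly cst p"
    using assms by (intro poly_eqI) (simp add: coeff_map_poly invariants_def)
  then show ?thesis by (simp add: poly_hom slice cst_plus_tvar poly_map_cst_Fract)
qed

lemma slice_transcendental: "\<not> algebraic_over (invariants \<alpha>) s"
proof
  assume "algebraic_over (invariants \<alpha>) s"
  then obtain p where p: "p \<noteq> 0" "\<forall>i. coeff p i \<in> invariants \<alpha>" "poly p s = 0"
    unfolding algebraic_over_def by blast
  then have "Fract (p \<circ>\<^sub>p [:s, 1:]) 1 = 0" using coaction_poly_slice[OF p(2)] by simp
  then have "p \<circ>\<^sub>p [:s, 1:] = 0" by (simp add: Zero_fract_def eq_fract)
  with p(1) show False by (simp add: pcompose_eq_0_iff)
qed

lemma invariant_coeffs_translate: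
  assumes "map_poly \<alpha> R = shift_pol R"
  shows "coeff (R \<circ>\<^sub>p [:- s, 1:]) i \<in> invariants \<alpha>"
proof -
  have "map_poly \<alpha> (R \<circ>\<^sub>p [:- s, 1:]) = shift_pol R \<circ>\<^sub>p [:- (cst s + tvar), 1:]"
    by (simp add: map_poly_hom_pcompose assms map_poly_pCons hom_uminus hom_one slice)
  also have "\<dots> = map_poly cst R \<circ>\<^sub>p ([:tvar, 1:] \<circ>\<^sub>p [:- (cst s + tvar), 1:])"
    by (simp add: shift_pol_def pcompose_assoc)
  also have "\<dots> = map_poly cst (R \<circ>\<^sub>p [:- s, 1:])"
    by (simp add: pcompose_pCons cst.map_poly_hom_pcompose map_poly_pCons cst.hom_uminus
        cst.hom_one)
  finally have "coeff (map_poly \<alpha> (R \<circ>\<^sub>p [:- s, 1:])) i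
      = coeff (map_poly cst (R \<circ>\<^sub>p [:- s, 1:])) i" by (rule arg_cong)
  then show ?thesis by (simp add: coeff_map_poly invariants_def)
qed

lemma slice_generates: "gen_field (invariants \<alpha> \<union> {s}) = UNIV"
proof (intro set_eqI iffI UNIV_I)
  fix h
  obtain P Q where PQ: "map_poly \<alpha> P = shift_pol P" "map_poly \<alpha> Q = shift_pol Q"
    "poly Q 0 \<noteq> 0" "poly P 0 = h * poly Q 0"
    using coaction_repr by blast
  have "h = poly (P \<circ>\<^sub>p [:- s, 1:]) s / poly (Q \<circ>\<^sub>p [:- s, 1:]) s"
    using PQ(3,4) by (simp add: poly_pcompose)
  also have "\<dots> \<in> gen_field (invariants \<alpha> \<union> {s})"
    using PQ(1,2) by (intro poly_quotient_in_gen_field allI invariant_coeffs_translate)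
  finally show "h \<in> gen_field (invariants \<alpha> \<union> {s})" .
qed

end

end

theorem mainTheorem2:
  fixes k :: "'a::field_char_0 set" and \<alpha> :: "'a \<Rightarrow> 'a poly fract"
  assumes "function_field_over k"
    and "rational_Ga_action k \<alpha>"
    and "\<exists>h. \<alpha> h \<noteq> cst h"
  shows "\<exists>s. \<not> algebraic_over (invariants \<alpha>) s \<and>
             \<alpha> s = cst s + tvar \<and>
             gen_field (invariants \<alpha> \<union> {s}) = UNIV \<and>
             (\<forall>p q. (\<forall>i. coeff p i \<in> invariants \<alpha>) \<longrightarrow> (\<forall>i. coeff q i \<in> invariants \<alpha>) \<longrightarrow>
                 poly q s \<noteq> 0 \<longrightarrow>
                 \<alpha> (poly p s / poly q s) = Fract (pcompose p [:s, 1:]) (pcompose q [:s, 1:]))"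
proof -
  interpret Ga_action k \<alpha> by unfold_locales (rule assms(2))
  obtain s where slice: "\<alpha> s = cst s + tvar"
    using assms(3) slice_exists by blast
  have "\<alpha> (poly p s / poly q s) = Fract (p \<circ>\<^sub>p [:s, 1:]) (q \<circ>\<^sub>p [:s, 1:])"
    if "\<forall>i. coeff p i \<in> invariants \<alpha>" "\<forall>i. coeff q i \<in> invariants \<alpha>" for p q
    using that by (simp add: hom_divide coaction_poly_slice[OF slice])
  then show ?thesis
    using slice slice_transcendental[OF slice] slice_generates[OF slice] by blast
qed

end
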